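(* Consider the correlation Bell expression $\mathcal B_{Z4}$ with Alice's settings indexed by pairs $(i,j)$, $1\le i<j\le 4$ (6 settings), Bob's settings $k=1,\dots,4$, and coefficient matrix $M_{(i,j),k}=\delta_{ik}-\delta_{jk}$. Its maximal classical value is $8$; its maximal value over qubits with measurement directions restricted to the $xz$-plane (vectors $(\sin\theta,0,\cos\theta)$) is $4(1+\sqrt2)$; its maximal value over qubits with arbitrary directions in $S^2$ is $4\sqrt6$; and its maximal quantum value $Q(M)$ is also $4\sqrt6$. In particular, for $\mathcal B_{Z4}$ the maximal quantum value is attained by qubits.
   Context: The quantum value is $Q(M)=\sup\sum M_{(i,j),k}\langle\psi|A_{ij}\otimes B_k|\psi\rangle$ over all finite $D$, unit $|\psi\rangle\in\mathbb{C}^D\otimes\mathbb{C}^D$ and Hermitian $A_{ij},B_k$ on $\mathbb{C}^D$ with $A_{ij}^2=B_k^2=\mathbb{1}$. The classical value is the maximum of $\sum M_{(i,j),k}a_{ij}b_k$ over $a_{ij},b_k\in\{\pm1\}$. The qubit value is the maximum of $\sum M_{(i,j),k}\langle\psi|(\vec a_{ij}\cdot\vec\sigma)\otimes(\vec b_k\cdot\vec\sigma^T)|\psi\rangle$ over unit $|\psi\rangle\in\mathbb{C}^2\otimes\mathbb{C}^2$ and unit vectors $\vec a_{ij},\vec b_k$ in $S^2$ (or in the stated plane), where $\vec\sigma=(\sigma_x,\sigma_y,\sigma_z)$ are the Pauli matrices and $\vec\sigma^T$ their transposes. *)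

theory Defs
  imports Complex_Main "Jordan_Normal_Form.Matrix" "Jordan_Normal_Form.Schur_Decomposition"
begin

text \<open>Vector in C^D \<otimes> C^D is a vector of length D*D, with basis index (a,b) \<mapsto> a*D+b.
  Expectation value  <psi| A \<otimes> B |psi>.\<close>
definition tensor_expect :: "nat \<Rightarrow> complex Matrix.vec \<Rightarrow> complex mat \<Rightarrow> complex mat \<Rightarrow> complex" where
  "tensor_expect D psi A B =
     (\<Sum>a<D. \<Sum>b<D. \<Sum>a'<D. \<Sum>b'<D.
        cnj (psi $ (a*D+b)) * A $$ (a,a') * B $$ (b,b') * psi $ (a'*D+b'))"

definition unit_state :: "nat \<Rightarrow> complex Matrix.vec \<Rightarrow> bool" where
  "unit_state D psi \<longleftrightarrow> psi \<in> carrier_vec (D*D) \<and> (\<Sum>i<D*D. (cmod (psi $ i))\<^sup>2) = 1"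

definition pm_observable :: "nat \<Rightarrow> complex mat \<Rightarrow> bool" where
  "pm_observable D A \<longleftrightarrow> A \<in> carrier_mat D D \<and> mat_adjoint A = A \<and> A * A = 1\<^sub>m D"

definition bell_value :: "'x set \<Rightarrow> 'y set \<Rightarrow> ('x \<Rightarrow> 'y \<Rightarrow> real) \<Rightarrow> nat \<Rightarrow> complex Matrix.vec
    \<Rightarrow> ('x \<Rightarrow> complex mat) \<Rightarrow> ('y \<Rightarrow> complex mat) \<Rightarrow> real" where
  "bell_value X Y M D psi A B = (\<Sum>x\<in>X. \<Sum>y\<in>Y. M x y * Re (tensor_expect D psi (A x) (B y)))"

definition quantum_values :: "'x set \<Rightarrow> 'y set \<Rightarrow> ('x \<Rightarrow> 'y \<Rightarrow> real) \<Rightarrow> real set" where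
  "quantum_values X Y M = {bell_value X Y M D psi A B | D psi A B.
      unit_state D psi \<and> (\<forall>x\<in>X. pm_observable D (A x)) \<and> (\<forall>y\<in>Y. pm_observable D (B y))}"

definition quantum_value :: "'x set \<Rightarrow> 'y set \<Rightarrow> ('x \<Rightarrow> 'y \<Rightarrow> real) \<Rightarrow> real" where
  "quantum_value X Y M = Sup (quantum_values X Y M)"

definition classical_values :: "'x set \<Rightarrow> 'y set \<Rightarrow> ('x \<Rightarrow> 'y \<Rightarrow> real) \<Rightarrow> real set" where
  "classical_values X Y M = {(\<Sum>x\<in>X. \<Sum>y\<in>Y. M x y * a x * b y) | a b.
      (\<forall>x\<in>X. a x \<in> {-1, 1}) \<and> (\<forall>y\<in>Y. b y \<in> {-1, 1})}"

definition sigma_x :: "complex mat" where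
  "sigma_x = mat_of_rows_list 2 [[0, 1], [1, 0]]"
definition sigma_y :: "complex mat" where
  "sigma_y = mat_of_rows_list 2 [[0, -\<i>], [\<i>, 0]]"
definition sigma_z :: "complex mat" where
  "sigma_z = mat_of_rows_list 2 [[1, 0], [0, -1]]"

definition sigma_dot :: "real \<times> real \<times> real \<Rightarrow> complex mat" where
  "sigma_dot v = (case v of (v1, v2, v3) \<Rightarrow>
     complex_of_real v1 \<cdot>\<^sub>m sigma_x + complex_of_real v2 \<cdot>\<^sub>m sigma_y + complex_of_real v3 \<cdot>\<^sub>m sigma_z)"

definition unit_vec3 :: "real \<times> real \<times> real \<Rightarrow> bool" where
  "unit_vec3 v \<longleftrightarrow> (case v of (v1, v2, v3) \<Rightarrow> v1\<^sup>2 + v2\<^sup>2 + v3\<^sup>2 = 1)"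

definition qubit_values :: "(real \<times> real \<times> real) set \<Rightarrow> 'x set \<Rightarrow> 'y set \<Rightarrow> ('x \<Rightarrow> 'y \<Rightarrow> real) \<Rightarrow> real set" where
  "qubit_values S X Y M = {bell_value X Y M 2 psi (\<lambda>x. sigma_dot (a x)) (\<lambda>y. transpose_mat (sigma_dot (b y))) | psi a b.
      unit_state 2 psi \<and> (\<forall>x\<in>X. a x \<in> S) \<and> (\<forall>y\<in>Y. b y \<in> S)}"

definition sphere3 :: "(real \<times> real \<times> real) set" where
  "sphere3 = {v. unit_vec3 v}"

definition xz_circle :: "(real \<times> real \<times> real) set" where
  "xz_circle = {(sin t, 0, cos t) | t. True}"

definition is_max :: "real set \<Rightarrow> real \<Rightarrow> bool" where
  "is_max S m \<longleftrightarrow> m \<in> S \<and> (\<forall>s\<in>S. s \<le> m)"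

definition Z4_alice :: "(nat \<times> nat) set" where
  "Z4_alice = {(i, j). 1 \<le> i \<and> i < j \<and> j \<le> 4}"
definition Z4_bob :: "nat set" where
  "Z4_bob = {1..4}"
definition M_Z4 :: "nat \<times> nat \<Rightarrow> nat \<Rightarrow> real" where
  "M_Z4 ij k = (case ij of (i, j) \<Rightarrow> (if i = k then 1 else 0) - (if j = k then 1 else 0))"

end

theory Submission
  imports Defs "HOL-Analysis.L2_Norm"
begin

(* Writing
   u_ij = (A_ij^dagger (x) 1) psi and w_k = (1 (x) B_k) psi, each term of the Bell value is
   Re<u_ij, w_i - w_j>; observables are unitary, so all u_ij, w_k are unit vectors and
   Cauchy-Schwarz bounds the term by |w_i - w_j|.  For four unit vectors
   sum_{i<j} |w_i - w_j|^2 = 16 - |w_1 + ... + w_4|^2 <= 16, and a second Cauchy-Schwarz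
   over the six pairs gives at most sqrt (6 * 16) = 4 sqrt 6.

   For Bob's operators b.sigma^T the vector w_k satisfies
   |w_i - w_j| = |b_i - b_j|, so the same estimate becomes a sum of six chord lengths.  On
   the circle b_k = (sin t_k, 0, cos t_k) this sum is 2 sum |sin (t_i/2 - t_j/2)|, which is
   at most 2 (2 + 2 sqrt 2) by a concavity argument for sorted angles.

   Attainment is shown by explicit strategies on the maximally entangled state, for which
   <(a.sigma) (x) (b.sigma)^T> = a.b; the classical bound is a finite case analysis.
   Since qubit values are quantum values, 4 sqrt 6 is also the supremum Q(M). *)


section \<open>Vectors of C^D \<otimes> C^D as D \<times> D arrays\<close>

lemma sum_lessThan_mult_split:
  "(\<Sum>i<m*n. f i) = (\<Sum>a<m. \<Sum>b<n. f (a*n+b))" for f :: "nat \<Rightarrow> 'a::comm_monoid_add"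
proof (induction m)
  case 0 then show ?case by simp
next
  case (Suc m)
  have "(\<Sum>i<Suc m*n. f i) = (\<Sum>i<m*n. f i) + (\<Sum>i\<in>{m*n..<m*n+n}. f i)"
    by (simp add: add.commute sum.atLeastLessThan_concat[symmetric] lessThan_atLeast0 sum.atLeastLessThan_concat)
  also have "(\<Sum>i\<in>{m*n..<m*n+n}. f i) = (\<Sum>b<n. f (m*n+b))"
    using sum.shift_bounds_nat_ivl[of f 0 "m*n" n] by (simp add: lessThan_atLeast0 add.commute)
  finally show ?case using Suc by simp
qed

definition norm2_arr :: "nat \<Rightarrow> (nat \<Rightarrow> nat \<Rightarrow> complex) \<Rightarrow> real" where
  "norm2_arr D u = (\<Sum>a<D. \<Sum>b<D. (cmod (u a b))\<^sup>2)"

definition inner_arr :: "nat \<Rightarrow> (nat \<Rightarrow> nat \<Rightarrow> complex) \<Rightarrow> (nat \<Rightarrow> nat \<Rightarrow> complex) \<Rightarrow> complex" where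
  "inner_arr D u w = (\<Sum>a<D. \<Sum>b<D. cnj (u a b) * w a b)"

lemma norm2_arr_nonneg: "0 \<le> norm2_arr D u"
  by (simp add: norm2_arr_def sum_nonneg)

lemma inner_arr_cauchy_schwarz: "cmod (inner_arr D u w) \<le> sqrt (norm2_arr D u) * sqrt (norm2_arr D w)"
proof -
  let ?S = "{..<D} \<times> {..<D}"
  have "cmod (inner_arr D u w) \<le> (\<Sum>p\<in>?S. \<bar>cmod (case_prod u p)\<bar> * \<bar>cmod (case_prod w p)\<bar>)"
    unfolding inner_arr_def sum.cartesian_product
    by (rule order_trans[OF norm_sum]) (simp add: norm_mult split_def)
  also have "\<dots> \<le> L2_set (\<lambda>p. cmod (case_prod u p)) ?S * L2_set (\<lambda>p. cmod (case_prod w p)) ?S"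
    by (rule L2_set_mult_ineq)
  also have "\<dots> = sqrt (norm2_arr D u) * sqrt (norm2_arr D w)"
    unfolding L2_set_def norm2_arr_def sum.cartesian_product by (simp add: split_def)
  finally show ?thesis .
qed

lemma re_inner_diff_le:
  assumes "norm2_arr D u = 1"
  shows "Re (inner_arr D u w1) - Re (inner_arr D u w2) \<le> sqrt (norm2_arr D (\<lambda>a b. w1 a b - w2 a b))"
proof -
  have "Re (inner_arr D u w1) - Re (inner_arr D u w2) = Re (inner_arr D u (\<lambda>a b. w1 a b - w2 a b))"
    by (simp add: inner_arr_def right_diff_distrib sum_subtractf)
  also have "\<dots> \<le> cmod (inner_arr D u (\<lambda>a b. w1 a b - w2 a b))" by (rule complex_Re_le_cmod)
  also have "\<dots> \<le> sqrt (norm2_arr D (\<lambda>a b. w1 a b - w2 a b))"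
    using inner_arr_cauchy_schwarz[of D u] assms by simp
  finally show ?thesis .
qed

lemma norm2_arr_diff:
  "norm2_arr D (\<lambda>a b. u a b - w a b) = norm2_arr D u + norm2_arr D w - 2 * Re (inner_arr D u w)"
proof -
  have pt: "\<And>x y::complex. (cmod (x - y))\<^sup>2 = (cmod x)\<^sup>2 + (cmod y)\<^sup>2 - 2 * Re (cnj x * y)"
    by (simp only: cmod_power2) (simp add: power2_eq_square algebra_simps)
  show ?thesis
    unfolding norm2_arr_def inner_arr_def Re_sum
    by (simp only: pt sum.distrib sum_subtractf sum_distrib_left)
qed

lemma norm2_arr_sum4:
  "norm2_arr D (\<lambda>a b. w1 a b + w2 a b + w3 a b + w4 a b) =
   norm2_arr D w1 + norm2_arr D w2 + norm2_arr D w3 + norm2_arr D w4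
   + 2 * (Re (inner_arr D w1 w2) + Re (inner_arr D w1 w3) + Re (inner_arr D w1 w4)
     + Re (inner_arr D w2 w3) + Re (inner_arr D w2 w4) + Re (inner_arr D w3 w4))"
proof -
  have pt: "\<And>x1 x2 x3 x4::complex. (cmod (x1+x2+x3+x4))\<^sup>2 = (cmod x1)\<^sup>2 + (cmod x2)\<^sup>2 + (cmod x3)\<^sup>2 + (cmod x4)\<^sup>2
     + 2 * Re (cnj x1 * x2) + 2 * Re (cnj x1 * x3) + 2 * Re (cnj x1 * x4)
     + 2 * Re (cnj x2 * x3) + 2 * Re (cnj x2 * x4) + 2 * Re (cnj x3 * x4)"
    by (simp only: cmod_power2) (simp add: power2_eq_square algebra_simps)
  show ?thesis
    unfolding norm2_arr_def inner_arr_def Re_sum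
    by (simp only: pt sum.distrib sum_distrib_left distrib_left)
qed

text \<open>Four unit vectors have total squared pairwise distance
  16 - |w_1 + w_2 + w_3 + w_4|^2 \<le> 16.\<close>
lemma pairwise_distances_unit4:
  assumes "norm2_arr D w1 = 1" "norm2_arr D w2 = 1" "norm2_arr D w3 = 1" "norm2_arr D w4 = 1"
  shows "norm2_arr D (\<lambda>a b. w1 a b - w2 a b) + norm2_arr D (\<lambda>a b. w1 a b - w3 a b)
       + norm2_arr D (\<lambda>a b. w1 a b - w4 a b) + norm2_arr D (\<lambda>a b. w2 a b - w3 a b)
       + norm2_arr D (\<lambda>a b. w2 a b - w4 a b) + norm2_arr D (\<lambda>a b. w3 a b - w4 a b) \<le> 16"
proof -
  have "0 \<le> norm2_arr D (\<lambda>a b. w1 a b + w2 a b + w3 a b + w4 a b)" by (rule norm2_arr_nonneg)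
  then show ?thesis unfolding norm2_arr_diff norm2_arr_sum4 using assms by simp
qed

text \<open>Cauchy-Schwarz against the constant vector: a sum of square roots over a finite
  set I is at most sqrt (card I * sum).\<close>
lemma sum_sqrt_le:
  fixes f :: "'a \<Rightarrow> real"
  assumes "\<And>i. i \<in> I \<Longrightarrow> 0 \<le> f i"
  shows "(\<Sum>i\<in>I. sqrt (f i)) \<le> sqrt (card I * (\<Sum>i\<in>I. f i))"
proof -
  have "(\<Sum>i\<in>I. sqrt (f i)) = (\<Sum>i\<in>I. \<bar>sqrt (f i)\<bar> * \<bar>1\<bar>)"
    using assms by (intro sum.cong) auto
  also have "\<dots> \<le> L2_set (\<lambda>i. sqrt (f i)) I * L2_set (\<lambda>_. 1) I" by (rule L2_set_mult_ineq)
  also have "L2_set (\<lambda>i. sqrt (f i)) I = sqrt (\<Sum>i\<in>I. f i)"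
    unfolding L2_set_def using assms by (intro arg_cong[where f = sqrt] sum.cong) simp_all
  also have "L2_set (\<lambda>_. 1) I = sqrt (card I)" by (simp add: L2_set_constant)
  finally show ?thesis by (simp add: real_sqrt_mult mult.commute)
qed


section \<open>\<open>\<plusminus>1\<close> observables act isometrically\<close>

lemma mat_mult_index: "A \<in> carrier_mat n n \<Longrightarrow> B \<in> carrier_mat n n \<Longrightarrow> i < n \<Longrightarrow> j < n \<Longrightarrow>
  (A * B) $$ (i,j) = (\<Sum>k<n. A $$ (i,k) * B $$ (k,j))"
  by (simp add: scalar_prod_def lessThan_atLeast0)

lemma mat_adjoint_index:
  assumes A: "A \<in> carrier_mat n n" and i: "i < n" and j: "j < n"
  shows "mat_adjoint A $$ (i,j) = cnj (A $$ (j,i))"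
proof -
  have d: "dim_row A = n" "dim_col A = n" using A by auto
  have "mat_adjoint A $$ (i,j) = map conjugate (cols A) ! i $ j"
    unfolding mat_adjoint_def d(1) by (rule mat_of_rows_index) (simp_all add: d i j)
  also have "\<dots> = cnj (A $$ (j,i))" using d i j by simp
  finally show ?thesis .
qed

lemma mat_adjoint_carrier:
  assumes A: "A \<in> carrier_mat n n"
  shows "mat_adjoint A \<in> carrier_mat n n"
proof -
  have "mat_of_rows (dim_row A) (map conjugate (cols A))
      \<in> carrier_mat (length (map conjugate (cols A))) (dim_row A)"
    by (rule mat_of_rows_carrier(1))
  then show ?thesis unfolding mat_adjoint_def using A by simp
qed

lemma observable_entry_cnj:
  assumes "pm_observable D B" "i < D" "j < D"
  shows "B $$ (i,j) = cnj (B $$ (j,i))"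
proof -
  have B: "B \<in> carrier_mat D D" "mat_adjoint B = B" using assms(1) by (auto simp: pm_observable_def)
  have "B $$ (i,j) = mat_adjoint B $$ (i,j)" using B by simp
  also have "\<dots> = cnj (B $$ (j,i))" using mat_adjoint_index[OF B(1) assms(2,3)] .
  finally show ?thesis .
qed

text \<open>A Hermitian involution is unitary: its columns (and rows) are orthonormal.\<close>
lemma observable_columns_orthonormal:
  assumes "pm_observable D B" "k < D" "k' < D"
  shows "(\<Sum>j<D. cnj (B $$ (j,k)) * B $$ (j,k')) = (if k = k' then 1 else 0)"
proof -
  have B: "B \<in> carrier_mat D D" "B * B = 1\<^sub>m D" using assms(1) by (auto simp: pm_observable_def)
  have "(B * B) $$ (k,k') = (\<Sum>j<D. B $$ (k,j) * B $$ (j,k'))"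
    using mat_mult_index[OF B(1) B(1) assms(2,3)] .
  also have "\<dots> = (\<Sum>j<D. cnj (B $$ (j,k)) * B $$ (j,k'))"
    by (rule sum.cong[OF refl]) (subst observable_entry_cnj[OF assms(1) assms(2)], auto)
  finally show ?thesis using assms B by simp
qed

lemma observable_rows_orthonormal:
  assumes "pm_observable D A" "k < D" "k' < D"
  shows "(\<Sum>j<D. A $$ (k,j) * cnj (A $$ (k',j))) = (if k = k' then 1 else 0)"
proof -
  have A: "A \<in> carrier_mat D D" "A * A = 1\<^sub>m D" using assms(1) by (auto simp: pm_observable_def)
  have "(A * A) $$ (k,k') = (\<Sum>j<D. A $$ (k,j) * A $$ (j,k'))"
    using mat_mult_index[OF A(1) A(1) assms(2,3)] .
  also have "\<dots> = (\<Sum>j<D. A $$ (k,j) * cnj (A $$ (k',j)))"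
    by (rule sum.cong[OF refl]) (subst observable_entry_cnj[OF assms(1) _ assms(3)], auto)
  finally show ?thesis using assms A by simp
qed

lemma norm2_orthogonal_columns:
  fixes M :: "nat \<Rightarrow> nat \<Rightarrow> complex" and c :: real
  assumes H: "\<And>k k'. k<D \<Longrightarrow> k'<D \<Longrightarrow>
      (\<Sum>j<D. cnj (M j k) * M j k') = (if k = k' then complex_of_real c else 0)"
  shows "(\<Sum>j<D. (cmod (\<Sum>k<D. x k * M j k))\<^sup>2) = c * (\<Sum>k<D. (cmod (x k))\<^sup>2)"
proof -
  have col: "(\<Sum>j<D. M j k * cnj (M j k')) = (if k = k' then complex_of_real c else 0)"
    if "k < D" "k' < D" for k k'
  proof -
    have "(\<Sum>j<D. M j k * cnj (M j k')) = cnj (\<Sum>j<D. cnj (M j k) * M j k')" by simp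
    then show ?thesis using H[OF that] by auto
  qed
  have "complex_of_real (\<Sum>j<D. (cmod (\<Sum>k<D. x k * M j k))\<^sup>2)
      = (\<Sum>j<D. (\<Sum>k<D. x k * M j k) * cnj (\<Sum>k'<D. x k' * M j k'))"
    by (simp only: of_real_sum complex_norm_square)
  also have "\<dots> = (\<Sum>j<D. \<Sum>k<D. \<Sum>k'<D. (x k * cnj (x k')) * (M j k * cnj (M j k')))"
    unfolding cnj_sum sum_product by (rule sum.cong[OF refl])+ (simp add: mult_ac)
  also have "\<dots> = (\<Sum>k<D. \<Sum>j<D. \<Sum>k'<D. (x k * cnj (x k')) * (M j k * cnj (M j k')))"
    by (rule sum.swap)
  also have "\<dots> = (\<Sum>k<D. \<Sum>k'<D. \<Sum>j<D. (x k * cnj (x k')) * (M j k * cnj (M j k')))"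
    by (rule sum.cong[OF refl], rule sum.swap)
  also have "\<dots> = (\<Sum>k<D. \<Sum>k'<D. (x k * cnj (x k')) * (\<Sum>j<D. M j k * cnj (M j k')))"
    by (simp add: sum_distrib_left)
  also have "\<dots> = (\<Sum>k<D. \<Sum>k'<D. (x k * cnj (x k')) * (if k = k' then complex_of_real c else 0))"
    by (intro sum.cong refl) (simp add: col)
  also have "\<dots> = (\<Sum>k<D. x k * cnj (x k) * complex_of_real c)"
    by (simp add: if_distrib cong: if_cong)
  also have "\<dots> = (\<Sum>k<D. complex_of_real (c * (cmod (x k))\<^sup>2))"
    by (rule sum.cong[OF refl]) (simp only: of_real_mult complex_norm_square mult_ac)
  also have "\<dots> = complex_of_real (c * (\<Sum>k<D. (cmod (x k))\<^sup>2))"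
    by (simp only: of_real_sum sum_distrib_left)
  finally show ?thesis using of_real_eq_iff by blast
qed

text \<open>The vectors (A^\<dagger> \<otimes> 1) psi and (1 \<otimes> C) psi as D \<times> D arrays.\<close>
definition left_adj_apply :: "nat \<Rightarrow> complex Matrix.vec \<Rightarrow> complex mat \<Rightarrow> nat \<Rightarrow> nat \<Rightarrow> complex" where
  "left_adj_apply D psi A a' b = (\<Sum>a<D. cnj (A $$ (a,a')) * psi $ (a*D+b))"

definition right_apply :: "nat \<Rightarrow> complex Matrix.vec \<Rightarrow> complex mat \<Rightarrow> nat \<Rightarrow> nat \<Rightarrow> complex" where
  "right_apply D psi C a b = (\<Sum>b'<D. psi $ (a*D+b') * C $$ (b,b'))"

lemma tensor_expect_eq_inner:
  "tensor_expect D psi A C = inner_arr D (left_adj_apply D psi A) (right_apply D psi C)"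
proof -
  have "inner_arr D (left_adj_apply D psi A) (right_apply D psi C) =
     (\<Sum>a'<D. \<Sum>b<D. \<Sum>a<D. \<Sum>b'<D. cnj (psi $ (a*D+b)) * A $$ (a,a') * C $$ (b,b') * psi $ (a'*D+b'))"
    unfolding inner_arr_def left_adj_apply_def right_apply_def cnj_sum sum_product
    by (rule sum.cong[OF refl])+ (simp add: mult_ac)
  also have "\<dots> = (\<Sum>a'<D. \<Sum>a<D. \<Sum>b<D. \<Sum>b'<D. cnj (psi $ (a*D+b)) * A $$ (a,a') * C $$ (b,b') * psi $ (a'*D+b'))"
    by (rule sum.cong[OF refl], rule sum.swap)
  also have "\<dots> = (\<Sum>a<D. \<Sum>a'<D. \<Sum>b<D. \<Sum>b'<D. cnj (psi $ (a*D+b)) * A $$ (a,a') * C $$ (b,b') * psi $ (a'*D+b'))"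
    by (rule sum.swap)
  also have "\<dots> = tensor_expect D psi A C"
    unfolding tensor_expect_def by (rule sum.cong[OF refl], rule sum.swap)
  finally show ?thesis by (rule sym)
qed

lemma norm2_unit_state: "unit_state D psi \<Longrightarrow> norm2_arr D (\<lambda>a b. psi $ (a*D+b)) = 1"
  by (simp add: unit_state_def norm2_arr_def sum_lessThan_mult_split)

lemma norm2_right_apply:
  assumes "pm_observable D B" "unit_state D psi"
  shows "norm2_arr D (right_apply D psi B) = 1"
proof -
  have "norm2_arr D (right_apply D psi B) = (\<Sum>a<D. 1 * (\<Sum>k<D. (cmod (psi $ (a*D+k)))\<^sup>2))"
    unfolding norm2_arr_def right_apply_def
    by (rule sum.cong[OF refl], rule norm2_orthogonal_columns)
      (use observable_columns_orthonormal[OF assms(1)] in simp)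
  also have "\<dots> = 1" using norm2_unit_state[OF assms(2)] by (simp add: norm2_arr_def)
  finally show ?thesis .
qed

lemma norm2_left_adj_apply:
  assumes "pm_observable D A" "unit_state D psi"
  shows "norm2_arr D (left_adj_apply D psi A) = 1"
proof -
  have "norm2_arr D (left_adj_apply D psi A) =
      (\<Sum>b<D. \<Sum>a'<D. (cmod (\<Sum>a<D. psi $ (a*D+b) * cnj (A $$ (a,a'))))\<^sup>2)"
    unfolding norm2_arr_def left_adj_apply_def by (subst sum.swap) (simp add: mult.commute)
  also have "\<dots> = (\<Sum>b<D. 1 * (\<Sum>k<D. (cmod (psi $ (k*D+b)))\<^sup>2))"
    by (rule sum.cong[OF refl], rule norm2_orthogonal_columns)
      (use observable_rows_orthonormal[OF assms(1)] in simp)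
  also have "\<dots> = (\<Sum>k<D. \<Sum>b<D. (cmod (psi $ (k*D+b)))\<^sup>2)"
    by (simp only: mult_1_left) (rule sum.swap)
  also have "\<dots> = 1" using norm2_unit_state[OF assms(2)] by (simp add: norm2_arr_def)
  finally show ?thesis .
qed


section \<open>The Bell expression B_Z4\<close>

lemma Z4_alice_eq: "Z4_alice = {(1,2),(1,3),(1,4),(2,3),(2,4),(3,4)}"
proof -
  have "(i,j) \<in> {(1,2),(1,3),(1,4),(2,3),(2,4),(3,4)}" if "1 \<le> i" "i < j" "j \<le> (4::nat)" for i j
  proof -
    from that have "(i = 1 \<and> j = 2) \<or> (i = 1 \<and> j = 3) \<or> (i = 1 \<and> j = 4)
        \<or> (i = 2 \<and> j = 3) \<or> (i = 2 \<and> j = 4) \<or> (i = 3 \<and> j = 4)"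
      by arith
    then show ?thesis by auto
  qed
  then show ?thesis unfolding Z4_alice_def by auto
qed

lemma Z4_bob_eq: "Z4_bob = {1,2,3,4}"
  unfolding Z4_bob_def by auto

lemma card_Z4_alice: "card Z4_alice = 6"
  by (simp add: Z4_alice_eq)

lemma sum_Z4_alice:
  "(\<Sum>(i,j)\<in>Z4_alice. f i j) = f 1 2 + f 1 3 + f 1 4 + f 2 3 + f 2 4 + f 3 4"
  by (simp add: Z4_alice_eq add.assoc)

lemma Z4_sum:
  "(\<Sum>x\<in>Z4_alice. \<Sum>y\<in>Z4_bob. M_Z4 x y * g x y) = (\<Sum>(i,j)\<in>Z4_alice. g (i,j) i - g (i,j) j)"
  unfolding Z4_alice_eq Z4_bob_eq by (simp add: M_Z4_def)

text \<open>In any dimension the Bell value is bounded by the sum of the distances between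
  Bob's vectors w_k = (1 \<otimes> B_k) psi; no property of B is needed here.\<close>
lemma bell_Z4_le_distances:
  assumes psi: "unit_state D psi" and A: "\<forall>x\<in>Z4_alice. pm_observable D (A x)"
  shows "bell_value Z4_alice Z4_bob M_Z4 D psi A B \<le> (\<Sum>(i,j)\<in>Z4_alice.
      sqrt (norm2_arr D (\<lambda>a b. right_apply D psi (B i) a b - right_apply D psi (B j) a b)))"
proof -
  have "bell_value Z4_alice Z4_bob M_Z4 D psi A B = (\<Sum>(i,j)\<in>Z4_alice.
      Re (tensor_expect D psi (A (i,j)) (B i)) - Re (tensor_expect D psi (A (i,j)) (B j)))"
    unfolding bell_value_def by (rule Z4_sum)
  also have "\<dots> \<le> (\<Sum>(i,j)\<in>Z4_alice.
      sqrt (norm2_arr D (\<lambda>a b. right_apply D psi (B i) a b - right_apply D psi (B j) a b)))"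
  proof (rule sum_mono, clarify)
    fix i j assume "(i,j) \<in> Z4_alice"
    then have "norm2_arr D (left_adj_apply D psi (A (i,j))) = 1"
      using A psi norm2_left_adj_apply by blast
    then show "Re (tensor_expect D psi (A (i,j)) (B i)) - Re (tensor_expect D psi (A (i,j)) (B j))
        \<le> sqrt (norm2_arr D (\<lambda>a b. right_apply D psi (B i) a b - right_apply D psi (B j) a b))"
      unfolding tensor_expect_eq_inner by (rule re_inner_diff_le)
  qed
  finally show ?thesis .
qed

lemma bell_Z4_quantum_bound:
  assumes psi: "unit_state D psi" and A: "\<forall>x\<in>Z4_alice. pm_observable D (A x)"
    and B: "\<forall>y\<in>Z4_bob. pm_observable D (B y)"
  shows "bell_value Z4_alice Z4_bob M_Z4 D psi A B \<le> 4 * sqrt 6"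
proof -
  define d where "d i j = norm2_arr D (\<lambda>a b. right_apply D psi (B i) a b - right_apply D psi (B j) a b)"
    for i j
  have unit: "norm2_arr D (right_apply D psi (B k)) = 1" if "k \<in> Z4_bob" for k
    using B that norm2_right_apply[OF _ psi] by blast
  have "bell_value Z4_alice Z4_bob M_Z4 D psi A B \<le> (\<Sum>(i,j)\<in>Z4_alice. sqrt (d i j))"
    using bell_Z4_le_distances[OF psi A] unfolding d_def .
  also have "\<dots> = (\<Sum>p\<in>Z4_alice. sqrt (case_prod d p))" by (simp add: split_def)
  also have "\<dots> \<le> sqrt (card Z4_alice * (\<Sum>p\<in>Z4_alice. case_prod d p))"
    by (rule sum_sqrt_le) (auto simp: d_def norm2_arr_nonneg)
  also have "\<dots> \<le> sqrt (6 * 16)"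
  proof -
    have "(\<Sum>p\<in>Z4_alice. case_prod d p) = d 1 2 + d 1 3 + d 1 4 + d 2 3 + d 2 4 + d 3 4"
      by (simp add: Z4_alice_eq add.assoc)
    also have "\<dots> \<le> 16"
      unfolding d_def by (rule pairwise_distances_unit4) (simp_all add: unit Z4_bob_eq)
    finally show ?thesis by (simp add: card_Z4_alice)
  qed
  also have "sqrt (6 * 16) = 4 * sqrt 6"
    using real_sqrt_mult[of 16 6] by simp
  finally show ?thesis by simp
qed


section \<open>The classical value\<close>

lemma classical_Z4_max: "is_max (classical_values Z4_alice Z4_bob M_Z4) 8"
proof -
  have expand: "(\<Sum>x\<in>Z4_alice. \<Sum>y\<in>Z4_bob. M_Z4 x y * a x * b y)
      = (\<Sum>(i,j)\<in>Z4_alice. a (i,j) * (b i - b j))"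
    for a :: "nat \<times> nat \<Rightarrow> real" and b :: "nat \<Rightarrow> real"
    using Z4_sum[of "\<lambda>x y. a x * b y"] by (simp add: mult.assoc right_diff_distrib)
  define b0 :: "nat \<Rightarrow> real" where "b0 k = (if k \<le> 2 then 1 else -1)" for k
  have "(\<Sum>x\<in>Z4_alice. \<Sum>y\<in>Z4_bob. M_Z4 x y * (\<lambda>_. 1) x * b0 y) = 8"
    unfolding expand sum_Z4_alice by (simp add: b0_def)
  then have attained: "(8::real) \<in> classical_values Z4_alice Z4_bob M_Z4"
    unfolding classical_values_def
    by (intro CollectI exI[of _ "\<lambda>_. 1::real"] exI[of _ b0]) (simp add: b0_def)
  have "s \<le> 8" if s_in: "s \<in> classical_values Z4_alice Z4_bob M_Z4" for s
  proof -
    obtain a b where s: "s = (\<Sum>x\<in>Z4_alice. \<Sum>y\<in>Z4_bob. M_Z4 x y * a x * b y)"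
      and a: "\<forall>x\<in>Z4_alice. a x \<in> {-1, 1}" and b: "\<forall>y\<in>Z4_bob. b y \<in> {-1::real, 1}"
      using s_in unfolding classical_values_def by blast
    have "s \<le> (\<Sum>(i,j)\<in>Z4_alice. \<bar>b i - b j\<bar>)"
      unfolding s expand using a by (intro sum_mono) (auto simp: abs_if)
    also have "\<dots> \<le> 8"
      unfolding sum_Z4_alice using b by (auto simp: Z4_bob_eq)
    finally show ?thesis .
  qed
  then show ?thesis unfolding is_max_def using attained by blast
qed


section \<open>Six chords between four points of a circle\<close>

lemma sin_add_le_twice_sin_mid:
  fixes a b :: real
  assumes "0 \<le> a" "0 \<le> b" "a + b \<le> 2*pi"
  shows "sin a + sin b \<le> 2 * sin ((a+b)/2)"
proof -
  have "0 \<le> sin ((a+b)/2)" using assms by (intro sin_ge_zero) auto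
  then have "sin ((a+b)/2) * cos ((a-b)/2) \<le> sin ((a+b)/2)"
    using cos_le_one mult_left_le by blast
  then show ?thesis unfolding sin_plus_sin by simp
qed

lemma sin_four_parts_le:
  fixes g1 g2 g3 g4 :: real
  assumes "0 \<le> g1" "0 \<le> g2" "0 \<le> g3" "0 \<le> g4" "g1 + g2 + g3 + g4 = pi"
  shows "sin g1 + sin g2 + sin g3 + sin g4 \<le> 2 * sqrt 2"
proof -
  have h: "(g1+g2)/2 + (g3+g4)/2 = pi/2" by (subst assms(5)[symmetric]) (simp add: field_simps)
  have "sin g1 + sin g2 \<le> 2 * sin ((g1+g2)/2)" using assms by (intro sin_add_le_twice_sin_mid) auto
  moreover have "sin g3 + sin g4 \<le> 2 * sin ((g3+g4)/2)" using assms by (intro sin_add_le_twice_sin_mid) auto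
  moreover have "sin ((g1+g2)/2) + sin ((g3+g4)/2) \<le> 2 * sin (((g1+g2)/2 + (g3+g4)/2)/2)"
  proof (rule sin_add_le_twice_sin_mid)
    show "(g1+g2)/2 + (g3+g4)/2 \<le> 2*pi" using h pi_gt_zero by linarith
  qed (use assms in simp_all)
  moreover have "((g1+g2)/2 + (g3+g4)/2)/2 = pi/4" by (simp only: h)
  ultimately show ?thesis by (simp add: sin_45)
qed

text \<open>Sum of |sin (x - y)| over the six pairs of four angles; it is symmetric in its
  arguments and its maximum 2 + 2 sqrt 2 bounds the planar qubit value.\<close>
definition sin_gap_sum :: "real \<Rightarrow> real \<Rightarrow> real \<Rightarrow> real \<Rightarrow> real" where
  "sin_gap_sum a b c d = \<bar>sin (a-b)\<bar> + \<bar>sin (a-c)\<bar> + \<bar>sin (a-d)\<bar>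
     + \<bar>sin (b-c)\<bar> + \<bar>sin (b-d)\<bar> + \<bar>sin (c-d)\<bar>"

lemma abs_sin_diff_commute: "\<bar>sin (x - y)\<bar> = \<bar>sin (y - x)\<bar>" for x y :: real
  by (metis abs_minus_cancel minus_diff_eq sin_minus)

text \<open>For sorted angles within an interval of length pi, the three consecutive gaps and
  the complement pi - (d - a) split pi into four parts.\<close>
lemma sin_gap_sum_sorted:
  assumes "a \<le> b" "b \<le> c" "c \<le> d" "d - a \<le> pi"
  shows "sin_gap_sum a b c d \<le> 2 + 2 * sqrt 2"
proof -
  have gap: "\<bar>sin (x - y)\<bar> = sin (y - x)" if "x \<le> y" "y - x \<le> pi" for x y
    using sin_ge_zero[of "y - x"] that abs_sin_diff_commute[of x y] by simp
  have "sin_gap_sum a b c d = sin (b-a) + sin (c-a) + sin (pi - (d-a)) + sin (c-b) + sin (d-b) + sin (d-c)"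
    unfolding sin_gap_sum_def using assms by (simp add: gap)
  moreover have "sin (b-a) + sin (c-b) + sin (d-c) + sin (pi - (d - a)) \<le> 2 * sqrt 2"
    using assms by (intro sin_four_parts_le) auto
  moreover have "sin (c-a) \<le> 1" "sin (d-b) \<le> 1" by simp_all
  ultimately show ?thesis by linarith
qed

lemma sin_gap_sum_swap12: "sin_gap_sum b a c d = sin_gap_sum a b c d"
  unfolding sin_gap_sum_def using abs_sin_diff_commute[of a b] by simp
lemma sin_gap_sum_swap34: "sin_gap_sum a b d c = sin_gap_sum a b c d"
  unfolding sin_gap_sum_def using abs_sin_diff_commute[of c d] by simp
lemma sin_gap_sum_swap13: "sin_gap_sum c b a d = sin_gap_sum a b c d"
  unfolding sin_gap_sum_def
  using abs_sin_diff_commute[of a b] abs_sin_diff_commute[of b c] abs_sin_diff_commute[of a c] by simp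
lemma sin_gap_sum_swap24: "sin_gap_sum a d c b = sin_gap_sum a b c d"
  unfolding sin_gap_sum_def
  using abs_sin_diff_commute[of b c] abs_sin_diff_commute[of c d] abs_sin_diff_commute[of b d] by simp
lemma sin_gap_sum_swap23: "sin_gap_sum a c b d = sin_gap_sum a b c d"
  unfolding sin_gap_sum_def using abs_sin_diff_commute[of b c] by simp

text \<open>Compare-exchange steps: ordering two arguments does not change the value.\<close>
lemma sin_gap_sum_sort12: "sin_gap_sum (min a b) (max a b) c d = sin_gap_sum a b c d"
  by (cases "a \<le> b") (simp_all add: min_def max_def sin_gap_sum_swap12)
lemma sin_gap_sum_sort34: "sin_gap_sum a b (min c d) (max c d) = sin_gap_sum a b c d"
  by (cases "c \<le> d") (simp_all add: min_def max_def sin_gap_sum_swap34)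
lemma sin_gap_sum_sort13: "sin_gap_sum (min a c) b (max a c) d = sin_gap_sum a b c d"
  by (cases "a \<le> c") (simp_all add: min_def max_def sin_gap_sum_swap13)
lemma sin_gap_sum_sort24: "sin_gap_sum a (min b d) c (max b d) = sin_gap_sum a b c d"
  by (cases "b \<le> d") (simp_all add: min_def max_def sin_gap_sum_swap24)
lemma sin_gap_sum_sort23: "sin_gap_sum a (min b c) (max b c) d = sin_gap_sum a b c d"
  by (cases "b \<le> c") (simp_all add: min_def max_def sin_gap_sum_swap23)

text \<open>Angles in [0, pi) are sorted by a five-comparator network, reducing to the sorted case.\<close>
lemma sin_gap_sum_in_half_period:
  assumes "0 \<le> a" "a < pi" "0 \<le> b" "b < pi" "0 \<le> c" "c < pi" "0 \<le> d" "d < pi"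
  shows "sin_gap_sum a b c d \<le> 2 + 2 * sqrt 2"
proof -
  define s1 s2 s3 s4 where "s1 = min a b" "s2 = max a b" "s3 = min c d" "s4 = max c d"
  define t1 t2 t3 t4 where "t1 = min s1 s3" "t2 = min s2 s4" "t3 = max s1 s3" "t4 = max s2 s4"
  define u2 u3 where "u2 = min t2 t3" "u3 = max t2 t3"
  have "sin_gap_sum a b c d = sin_gap_sum t1 u2 u3 t4"
    unfolding u2_u3_def sin_gap_sum_sort23 t1_t2_t3_t4_def sin_gap_sum_sort24 sin_gap_sum_sort13
      s1_s2_s3_s4_def sin_gap_sum_sort34 sin_gap_sum_sort12 ..
  also have "\<dots> \<le> 2 + 2 * sqrt 2"
    by (rule sin_gap_sum_sorted)
      (use assms in \<open>auto simp: u2_u3_def t1_t2_t3_t4_def s1_s2_s3_s4_def min_def max_def\<close>)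
  finally show ?thesis .
qed

lemma abs_sin_shift: "\<bar>sin (x + of_int n * pi)\<bar> = \<bar>sin x\<bar>" for x :: real
proof -
  have s: "sin (of_int n * pi) = 0" using sin_times_pi_eq_0[of "of_int n"] by simp
  have "(cos (of_int n * pi))\<^sup>2 = 1" using sin_cos_squared_add[of "of_int n * pi"] s by simp
  then have "\<bar>cos (of_int n * pi)\<bar> = 1" by (simp add: power2_eq_1_iff abs_if) linarith
  then show ?thesis by (simp add: sin_add s abs_mult)
qed

text \<open>Each |sin (x - y)| only depends on x, y modulo pi, so all angles may be reduced into
  [0, pi).\<close>
lemma sin_gap_sum_le: "sin_gap_sum a b c d \<le> 2 + 2 * sqrt 2"
proof -
  define r where "r x = pi * frac (x / pi)" for x
  have r_range: "0 \<le> r x \<and> r x < pi" for x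
    using frac_lt_1[of "x / pi"] pi_gt_zero unfolding r_def by simp
  have "\<bar>sin (r x - r y)\<bar> = \<bar>sin (x - y)\<bar>" for x y
  proof -
    have "r x - r y = (x - y) + of_int (\<lfloor>y / pi\<rfloor> - \<lfloor>x / pi\<rfloor>) * pi"
      by (simp add: r_def frac_def algebra_simps)
    then show ?thesis using abs_sin_shift by metis
  qed
  then have "sin_gap_sum a b c d = sin_gap_sum (r a) (r b) (r c) (r d)"
    unfolding sin_gap_sum_def by simp
  also have "\<dots> \<le> 2 + 2 * sqrt 2" using r_range by (intro sin_gap_sum_in_half_period) auto
  finally show ?thesis .
qed

lemma chord_length: "sqrt ((sin a - sin b)\<^sup>2 + (cos a - cos b)\<^sup>2) = 2 * \<bar>sin (a/2 - b/2)\<bar>"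
  for a b :: real
proof -
  have "(sin a - sin b)\<^sup>2 + (cos a - cos b)\<^sup>2 = 2 - 2 * cos (a - b)"
    using sin_cos_squared_add[of a] sin_cos_squared_add[of b]
    by (simp add: cos_diff power2_eq_square algebra_simps)
  also have "cos (a - b) = cos (2 * (a/2 - b/2))" by simp
  also have "\<dots> = 1 - 2 * (sin (a/2 - b/2))\<^sup>2" by (rule cos_double_sin)
  finally have "(sin a - sin b)\<^sup>2 + (cos a - cos b)\<^sup>2 = (2 * sin (a/2 - b/2))\<^sup>2"
    by (simp add: power2_eq_square)
  then show ?thesis by (simp only: real_sqrt_abs abs_mult)
qed

text \<open>Four points on the unit circle have total pairwise distance at most 4 (1 + sqrt 2),
  attained by the vertices of a square.\<close>
lemma circle_chord_sum_le:
  "(\<Sum>(i,j)\<in>Z4_alice. sqrt ((sin (t i) - sin (t j))\<^sup>2 + (cos (t i) - cos (t j))\<^sup>2)) \<le> 4 * (1 + sqrt 2)"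
proof -
  have "(\<Sum>(i,j)\<in>Z4_alice. sqrt ((sin (t i) - sin (t j))\<^sup>2 + (cos (t i) - cos (t j))\<^sup>2))
      = 2 * sin_gap_sum (t 1/2) (t 2/2) (t 3/2) (t 4/2)"
    unfolding sum_Z4_alice chord_length sin_gap_sum_def by (simp only: distrib_left)
  also have "\<dots> \<le> 2 * (2 + 2 * sqrt 2)" by (rule mult_left_mono[OF sin_gap_sum_le]) simp
  finally show ?thesis by simp
qed


section \<open>Qubit observables\<close>

lemma sum_lessThan_2: "(\<Sum>k<(2::nat). f k) = f 0 + f 1"
  by (simp add: numeral_2_eq_2)

lemma sigma_dot_dims [simp]: "dim_row (sigma_dot v) = 2" "dim_col (sigma_dot v) = 2"
  by (cases v, simp add: sigma_dot_def sigma_x_def sigma_y_def sigma_z_def mat_of_rows_list_def)+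

lemma sigma_dot_carrier: "sigma_dot v \<in> carrier_mat 2 2"
  by (rule carrier_matI) simp_all

lemma sigma_dot_index [simp]:
  "sigma_dot (v1,v2,v3) $$ (0,0) = complex_of_real v3"
  "sigma_dot (v1,v2,v3) $$ (0,1) = complex_of_real v1 - \<i> * complex_of_real v2"
  "sigma_dot (v1,v2,v3) $$ (1,0) = complex_of_real v1 + \<i> * complex_of_real v2"
  "sigma_dot (v1,v2,v3) $$ (1,1) = - complex_of_real v3"
  "sigma_dot (v1,v2,v3) $$ (0,Suc 0) = complex_of_real v1 - \<i> * complex_of_real v2"
  "sigma_dot (v1,v2,v3) $$ (Suc 0,0) = complex_of_real v1 + \<i> * complex_of_real v2"
  "sigma_dot (v1,v2,v3) $$ (Suc 0,Suc 0) = - complex_of_real v3"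
  by (simp_all add: sigma_dot_def sigma_x_def sigma_y_def sigma_z_def mat_of_rows_list_def)

lemma sigma_dot_observable:
  assumes "unit_vec3 v"
  shows "pm_observable 2 (sigma_dot v)"
proof -
  obtain v1 v2 v3 where v: "v = (v1,v2,v3)" by (cases v) auto
  have h: "v1*v1 + v2*v2 + v3*v3 = 1" using assms by (simp add: v unit_vec3_def power2_eq_square)
  have adj: "mat_adjoint (sigma_dot v) = sigma_dot v"
  proof (rule eq_matI)
    fix i j assume "i < dim_row (sigma_dot v)" "j < dim_col (sigma_dot v)"
    then have i: "i < 2" and j: "j < 2" by simp_all
    show "mat_adjoint (sigma_dot v) $$ (i,j) = sigma_dot v $$ (i,j)"
      unfolding mat_adjoint_index[OF sigma_dot_carrier i j] v
      using less_2_cases[OF i] less_2_cases[OF j] by (auto simp: complex_eq_iff)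
  qed (simp_all add: carrier_matD[OF mat_adjoint_carrier[OF sigma_dot_carrier]])
  have sq: "sigma_dot v * sigma_dot v = 1\<^sub>m 2"
  proof (rule eq_matI)
    fix i j assume "i < dim_row (1\<^sub>m 2::complex mat)" "j < dim_col (1\<^sub>m 2::complex mat)"
    then have i: "i < 2" and j: "j < 2" by simp_all
    show "(sigma_dot v * sigma_dot v) $$ (i,j) = 1\<^sub>m 2 $$ (i,j)"
      unfolding mat_mult_index[OF sigma_dot_carrier sigma_dot_carrier i j] sum_lessThan_2
      using less_2_cases[OF i] less_2_cases[OF j] i j h
      by (auto simp: v complex_eq_iff algebra_simps)
  qed simp_all
  show ?thesis unfolding pm_observable_def using adj sq sigma_dot_carrier by simp
qed

lemma transpose_observable:
  assumes "pm_observable D A"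
  shows "pm_observable D (transpose_mat A)"
proof -
  have A: "A \<in> carrier_mat D D" "A * A = 1\<^sub>m D" using assms by (auto simp: pm_observable_def)
  have T: "transpose_mat A \<in> carrier_mat D D" using A by simp
  have adj: "mat_adjoint (transpose_mat A) = transpose_mat A"
  proof (rule eq_matI)
    fix i j assume "i < dim_row (transpose_mat A)" "j < dim_col (transpose_mat A)"
    then have i: "i < D" and j: "j < D" using T by auto
    show "mat_adjoint (transpose_mat A) $$ (i,j) = transpose_mat A $$ (i,j)"
      unfolding mat_adjoint_index[OF T i j] using A(1) i j observable_entry_cnj[OF assms j i] by simp
  qed (use mat_adjoint_carrier[OF T] T in auto)
  have "transpose_mat A * transpose_mat A = transpose_mat (A * A)"
    using transpose_mult[OF A(1) A(1)] by simp
  also have "\<dots> = 1\<^sub>m D" using A(2) by simp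
  finally show ?thesis unfolding pm_observable_def using adj T by simp
qed

lemma qubit_values_subset_quantum_values:
  assumes "S \<subseteq> sphere3"
  shows "qubit_values S X Y M \<subseteq> quantum_values X Y M"
proof
  fix s assume "s \<in> qubit_values S X Y M"
  then obtain psi a b where
    s: "s = bell_value X Y M 2 psi (\<lambda>x. sigma_dot (a x)) (\<lambda>y. transpose_mat (sigma_dot (b y)))"
    and psi: "unit_state 2 psi" and a: "\<forall>x\<in>X. a x \<in> S" and b: "\<forall>y\<in>Y. b y \<in> S"
    unfolding qubit_values_def by blast
  have unit: "unit_vec3 v" if "v \<in> S" for v using assms that by (auto simp: sphere3_def)
  have "\<forall>x\<in>X. pm_observable 2 (sigma_dot (a x))" using a unit sigma_dot_observable by blast
  moreover have "\<forall>y\<in>Y. pm_observable 2 (transpose_mat (sigma_dot (b y)))"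
    using b unit sigma_dot_observable transpose_observable by blast
  ultimately show "s \<in> quantum_values X Y M"
    unfolding quantum_values_def using s psi by blast
qed

lemma norm2_right_apply_sigma_diff:
  assumes psi: "unit_state 2 psi"
  shows "norm2_arr 2 (\<lambda>a b. right_apply 2 psi (transpose_mat (sigma_dot (p1,p2,p3))) a b
                         - right_apply 2 psi (transpose_mat (sigma_dot (q1,q2,q3))) a b)
     = (p1-q1)\<^sup>2 + (p2-q2)\<^sup>2 + (p3-q3)\<^sup>2"
proof -
  define M where "M j k = transpose_mat (sigma_dot (p1,p2,p3)) $$ (j,k)
      - transpose_mat (sigma_dot (q1,q2,q3)) $$ (j,k)" for j k
  define c where "c = (p1-q1)\<^sup>2 + (p2-q2)\<^sup>2 + (p3-q3)\<^sup>2"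
  have "norm2_arr 2 (\<lambda>a b. right_apply 2 psi (transpose_mat (sigma_dot (p1,p2,p3))) a b
                         - right_apply 2 psi (transpose_mat (sigma_dot (q1,q2,q3))) a b)
      = (\<Sum>a<2. \<Sum>b<2. (cmod (\<Sum>k<2. psi $ (a*2+k) * M b k))\<^sup>2)"
    unfolding norm2_arr_def right_apply_def M_def by (simp only: right_diff_distrib sum_subtractf)
  also have "\<dots> = (\<Sum>a<2. c * (\<Sum>k<2. (cmod (psi $ (a*2+k)))\<^sup>2))"
  proof (rule sum.cong[OF refl], rule norm2_orthogonal_columns)
    fix k k' :: nat assume k: "k < 2" and k': "k' < 2"
    show "(\<Sum>j<2. cnj (M j k) * M j k') = (if k = k' then complex_of_real c else 0)"
      unfolding sum_lessThan_2 M_def c_def using less_2_cases[OF k] less_2_cases[OF k']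
      by (auto simp: complex_eq_iff power2_eq_square algebra_simps)
  qed
  also have "\<dots> = c * norm2_arr 2 (\<lambda>a b. psi $ (a*2+b))" by (simp add: norm2_arr_def sum_distrib_left)
  also have "\<dots> = c" using norm2_unit_state[OF psi] by simp
  finally show ?thesis unfolding c_def .
qed

lemma bell_Z4_xz_bound:
  assumes psi: "unit_state 2 psi" and a: "\<forall>x\<in>Z4_alice. a x \<in> xz_circle"
    and b: "\<forall>y\<in>Z4_bob. b y \<in> xz_circle"
  shows "bell_value Z4_alice Z4_bob M_Z4 2 psi (\<lambda>x. sigma_dot (a x))
           (\<lambda>y. transpose_mat (sigma_dot (b y))) \<le> 4 * (1 + sqrt 2)"
proof -
  have "\<forall>k\<in>Z4_bob. \<exists>s. b k = (sin s, 0, cos s)" using b by (auto simp: xz_circle_def)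
  then obtain t where t: "\<And>k. k \<in> Z4_bob \<Longrightarrow> b k = (sin (t k), 0, cos (t k))"
    using bchoice by metis
  have "\<forall>x\<in>Z4_alice. pm_observable 2 (sigma_dot (a x))"
    using a sigma_dot_observable by (auto simp: xz_circle_def unit_vec3_def)
  then have "bell_value Z4_alice Z4_bob M_Z4 2 psi (\<lambda>x. sigma_dot (a x))
           (\<lambda>y. transpose_mat (sigma_dot (b y))) \<le> (\<Sum>(i,j)\<in>Z4_alice.
      sqrt (norm2_arr 2 (\<lambda>u v. right_apply 2 psi (transpose_mat (sigma_dot (b i))) u v
                              - right_apply 2 psi (transpose_mat (sigma_dot (b j))) u v)))"
    by (rule bell_Z4_le_distances[OF psi])
  also have "\<dots> = (\<Sum>(i,j)\<in>Z4_alice.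
      sqrt ((sin (t i) - sin (t j))\<^sup>2 + (cos (t i) - cos (t j))\<^sup>2))"
  proof (rule sum.cong[OF refl], clarify)
    fix i j assume "(i,j) \<in> Z4_alice"
    then have "i \<in> Z4_bob" "j \<in> Z4_bob" by (auto simp: Z4_alice_def Z4_bob_def)
    then show "sqrt (norm2_arr 2 (\<lambda>u v. right_apply 2 psi (transpose_mat (sigma_dot (b i))) u v
                              - right_apply 2 psi (transpose_mat (sigma_dot (b j))) u v))
        = sqrt ((sin (t i) - sin (t j))\<^sup>2 + (cos (t i) - cos (t j))\<^sup>2)"
      by (simp add: t norm2_right_apply_sigma_diff[OF psi])
  qed
  also have "\<dots> \<le> 4 * (1 + sqrt 2)" by (rule circle_chord_sum_le)
  finally show ?thesis .
qed


section \<open>Optimal strategies on the maximally entangled state\<close>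

definition phi_plus :: "complex Matrix.vec" where
  "phi_plus = vec 4 (\<lambda>i. if i = 0 \<or> i = 3 then complex_of_real (sqrt 2 / 2) else 0)"

lemma phi_plus_unit: "unit_state 2 phi_plus"
  unfolding unit_state_def phi_plus_def by (simp add: eval_nat_numeral power_divide)

lemma tensor_expect_phi_plus:
  "tensor_expect 2 phi_plus (sigma_dot (a1,a2,a3)) (transpose_mat (sigma_dot (b1,b2,b3)))
     = complex_of_real (a1*b1 + a2*b2 + a3*b3)"
  unfolding tensor_expect_def sum_lessThan_2 phi_plus_def
  by (simp add: complex_eq_iff algebra_simps power2_eq_square) (simp add: field_simps)

lemma bell_Z4_phi_plus:
  "bell_value Z4_alice Z4_bob M_Z4 2 phi_plus (\<lambda>x. sigma_dot (a x)) (\<lambda>y. transpose_mat (sigma_dot (b y)))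
     = (\<Sum>(i,j)\<in>Z4_alice. (case a (i,j) of (a1,a2,a3) \<Rightarrow> case b i of (p1,p2,p3) \<Rightarrow> case b j of (q1,q2,q3) \<Rightarrow>
          a1 * (p1 - q1) + a2 * (p2 - q2) + a3 * (p3 - q3)))"
  unfolding bell_value_def Z4_sum
  by (intro sum.cong refl) (auto simp: tensor_expect_phi_plus algebra_simps split: prod.split)

definition inv_sqrt2 :: real where "inv_sqrt2 = sqrt 2 / 2"
definition inv_sqrt3 :: real where "inv_sqrt3 = sqrt 3 / 3"

lemma inv_sqrt2_sq: "inv_sqrt2 * inv_sqrt2 = 1/2" by (simp add: inv_sqrt2_def)
lemma inv_sqrt3_sq: "inv_sqrt3 * inv_sqrt3 = 1/3" by (simp add: inv_sqrt3_def)

text \<open>Sphere optimum: Bob measures along the vertices of a regular tetrahedron and Alice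
  along the normalized edge vectors b_i - b_j.\<close>
definition bob_tetra :: "nat \<Rightarrow> real \<times> real \<times> real" where
  "bob_tetra k = (if k = 1 then (inv_sqrt3, inv_sqrt3, inv_sqrt3)
    else if k = 2 then (inv_sqrt3, -inv_sqrt3, -inv_sqrt3)
    else if k = 3 then (-inv_sqrt3, inv_sqrt3, -inv_sqrt3) else (-inv_sqrt3, -inv_sqrt3, inv_sqrt3))"

definition alice_tetra :: "nat \<times> nat \<Rightarrow> real \<times> real \<times> real" where
  "alice_tetra x = (if x = (1,2) then (0, inv_sqrt2, inv_sqrt2)
    else if x = (1,3) then (inv_sqrt2, 0, inv_sqrt2) else if x = (1,4) then (inv_sqrt2, inv_sqrt2, 0)
    else if x = (2,3) then (inv_sqrt2, -inv_sqrt2, 0) else if x = (2,4) then (inv_sqrt2, 0, -inv_sqrt2)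
    else (0, inv_sqrt2, -inv_sqrt2))"

text \<open>xz-circle optimum: Bob measures along the vertices of a square.\<close>
definition bob_square :: "nat \<Rightarrow> real \<times> real \<times> real" where
  "bob_square k = (if k = 1 then (0,0,1) else if k = 2 then (1,0,0) else if k = 3 then (0,0,-1) else (-1,0,0))"

definition alice_square :: "nat \<times> nat \<Rightarrow> real \<times> real \<times> real" where
  "alice_square x = (if x = (1,2) then (-inv_sqrt2, 0, inv_sqrt2) else if x = (1,3) then (0,0,1)
    else if x = (1,4) then (inv_sqrt2, 0, inv_sqrt2) else if x = (2,3) then (inv_sqrt2, 0, inv_sqrt2)
    else if x = (2,4) then (1,0,0) else (inv_sqrt2, 0, -inv_sqrt2))"

lemma tetra_on_sphere: "bob_tetra k \<in> sphere3" "alice_tetra x \<in> sphere3"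
  unfolding bob_tetra_def alice_tetra_def sphere3_def unit_vec3_def
  using inv_sqrt2_sq inv_sqrt3_sq by (auto simp: power2_eq_square)

lemma xz_circleI: "x = sin t \<Longrightarrow> z = cos t \<Longrightarrow> (x, 0, z) \<in> xz_circle"
  unfolding xz_circle_def by blast

lemma square_on_xz_circle: "bob_square k \<in> xz_circle" "alice_square x \<in> xz_circle"
proof -
  have "(0,0,1) \<in> xz_circle" by (rule xz_circleI[of _ 0]) simp_all
  moreover have "(1,0,0) \<in> xz_circle" by (rule xz_circleI[of _ "pi/2"]) simp_all
  moreover have "(0,0,-1) \<in> xz_circle" by (rule xz_circleI[of _ pi]) simp_all
  moreover have "(-1,0,0) \<in> xz_circle" by (rule xz_circleI[of _ "-(pi/2)"]) simp_all
  moreover have "(-inv_sqrt2,0,inv_sqrt2) \<in> xz_circle"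
    by (rule xz_circleI[of _ "-(pi/4)"]) (simp_all add: inv_sqrt2_def sin_45 cos_45)
  moreover have "(inv_sqrt2,0,inv_sqrt2) \<in> xz_circle"
    by (rule xz_circleI[of _ "pi/4"]) (simp_all add: inv_sqrt2_def sin_45 cos_45)
  moreover have "(inv_sqrt2,0,-inv_sqrt2) \<in> xz_circle"
    by (rule xz_circleI[of _ "pi - pi/4"]) (simp_all only: sin_pi_minus cos_pi_minus sin_45 cos_45 inv_sqrt2_def)
  ultimately show "bob_square k \<in> xz_circle" "alice_square x \<in> xz_circle"
    unfolding bob_square_def alice_square_def by auto
qed

lemma tetra_value:
  "bell_value Z4_alice Z4_bob M_Z4 2 phi_plus (\<lambda>x. sigma_dot (alice_tetra x))
     (\<lambda>y. transpose_mat (sigma_dot (bob_tetra y))) = 4 * sqrt 6"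
proof -
  have "sqrt 6 = sqrt 2 * sqrt 3" by (simp add: real_sqrt_mult[symmetric])
  then show ?thesis
    unfolding bell_Z4_phi_plus sum_Z4_alice
    by (simp add: alice_tetra_def bob_tetra_def inv_sqrt2_def inv_sqrt3_def algebra_simps)
qed

lemma square_value:
  "bell_value Z4_alice Z4_bob M_Z4 2 phi_plus (\<lambda>x. sigma_dot (alice_square x))
     (\<lambda>y. transpose_mat (sigma_dot (bob_square y))) = 4 * (1 + sqrt 2)"
  unfolding bell_Z4_phi_plus sum_Z4_alice
  by (simp add: alice_square_def bob_square_def inv_sqrt2_def algebra_simps)


lemma tetra_value_mem: "4 * sqrt 6 \<in> qubit_values sphere3 Z4_alice Z4_bob M_Z4"
  unfolding qubit_values_def
  by (intro CollectI exI[of _ phi_plus] exI[of _ alice_tetra] exI[of _ bob_tetra])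
    (simp add: tetra_value phi_plus_unit tetra_on_sphere)

lemma square_value_mem: "4 * (1 + sqrt 2) \<in> qubit_values xz_circle Z4_alice Z4_bob M_Z4"
  unfolding qubit_values_def
  by (intro CollectI exI[of _ phi_plus] exI[of _ alice_square] exI[of _ bob_square])
    (simp add: square_value phi_plus_unit square_on_xz_circle)

lemma quantum_values_le: "s \<in> quantum_values Z4_alice Z4_bob M_Z4 \<Longrightarrow> s \<le> 4 * sqrt 6"
  unfolding quantum_values_def using bell_Z4_quantum_bound by blast

lemma xz_values_le: "s \<in> qubit_values xz_circle Z4_alice Z4_bob M_Z4 \<Longrightarrow> s \<le> 4 * (1 + sqrt 2)"
  unfolding qubit_values_def using bell_Z4_xz_bound by blast

theorem mainTheorem10:
  shows "is_max (classical_values Z4_alice Z4_bob M_Z4) 8 \<and>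
     is_max (qubit_values xz_circle Z4_alice Z4_bob M_Z4) (4 * (1 + sqrt 2)) \<and>
     is_max (qubit_values sphere3 Z4_alice Z4_bob M_Z4) (4 * sqrt 6) \<and>
     quantum_value Z4_alice Z4_bob M_Z4 = 4 * sqrt 6"
proof -
  have qubit_in_quantum: "qubit_values sphere3 Z4_alice Z4_bob M_Z4 \<subseteq> quantum_values Z4_alice Z4_bob M_Z4"
    by (rule qubit_values_subset_quantum_values) simp
  have "is_max (qubit_values xz_circle Z4_alice Z4_bob M_Z4) (4 * (1 + sqrt 2))"
    unfolding is_max_def using square_value_mem xz_values_le by blast
  moreover have "is_max (qubit_values sphere3 Z4_alice Z4_bob M_Z4) (4 * sqrt 6)"
    unfolding is_max_def using tetra_value_mem qubit_in_quantum quantum_values_le by blast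
  moreover have "quantum_value Z4_alice Z4_bob M_Z4 = 4 * sqrt 6"
    unfolding quantum_value_def
    by (rule cSup_eq_maximum) (use tetra_value_mem qubit_in_quantum quantum_values_le in auto)
  ultimately show ?thesis using classical_Z4_max by blast
qed

end
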